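(* Let $\Gamma>0$ be an ordinal, $\mathcal{M}=(W,R,V)$ a Kripke model, $w_0\in W$, and $\varphi_0$ a sentence of the modal $\mu$-calculus in normal form. Then $\mathcal{M},w_0\vDash^\Gamma\varphi_0$ if and only if $\mathcal{M},w_0\Vdash^\Gamma\varphi_0$, i.e. $\varphi_0$ is true at $w_0$ under $\Gamma$-bounded compositional semantics iff Eloise has a winning strategy in the $\Gamma$-bounded evaluation game $(\mathcal{M},w_0,\varphi_0,\Gamma)$.
   Context: Formulae of the modal $\mu$-calculus over proposition symbols $\Phi$ and label symbols $\Lambda$: $\varphi ::= p \mid \neg p \mid X \mid \varphi\vee\varphi \mid \varphi\wedge\varphi \mid \Diamond\varphi \mid \Box\varphi \mid \mu X\varphi \mid \nu X\varphi$. $\mathrm{Sub}(\varphi)$ is the set of occurrences (nodes of the syntax tree); $\mathrm{Sub}_{\mu\nu}(\varphi)$ those of form $\mu X\psi$ or $\nu X\psi$. A sentence has no free label occurrences. Normal form: each label symbol occurs at most once in a $\mu$- or $\nu$-operator. For an atomic occurrence $X$ in a sentence $\varphi_0$, $\mathrm{rf}(X)$ is the nearest ancestor occurrence of the form $\mu X\psi$ or $\nu X\psi$. $\Gamma$-bounded compositional semantics ($\mathcal{M}=(W,R,V)$, assignment $s:\Lambda\to\mathcal{P}(W)$): $\mathcal{M},w\vDash^\Gamma_s p$ iff $w\in V(p)$; $\neg p$ iff $w\notin V(p)$; $X$ iff $w\in s(X)$; $\vee,\wedge$ as usual; $\Diamond\psi$ iff some $v$ with $wRv$ satisfies $\psi$;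 $\Box\psi$ iff all $v$ with $wRv$ satisfy $\psi$; $\mathcal{M},w\vDash^\Gamma_s\mu X\psi$ iff $w\in F^\Gamma_\mu$ and $\mathcal{M},w\vDash^\Gamma_s\nu X\psi$ iff $w\in F^\Gamma_\nu$, where $F(A)=\{v\in W\mid\mathcal{M},v\vDash^\Gamma_{s[A/X]}\psi\}$ ($s[A/X]$ agrees with $s$ except $X\mapsto A$), and for $F:\mathcal{P}(W)\to\mathcal{P}(W)$: $F^0_\mu=\emptyset$, $F^{\beta+1}_\mu=F(F^\beta_\mu)$, $F^\lambda_\mu=\bigcup_{\delta<\lambda}F^\delta_\mu$ ($\lambda$ limit); $F^0_\nu=W$, $F^{\beta+1}_\nu=F(F^\beta_\nu)$, $F^\lambda_\nu=\bigcap_{\delta<\lambda}F^\delta_\nu$ ($\lambda$ limit). For a sentence truth does not depend on $s$, written $\mathcal{M},w\vDash^\Gamma\varphi$. The $\Gamma$-bounded evaluation game $(\mathcal{M},w_0,\varphi_0,\Gamma)$: players Eloise and Abelard; positions $(w,\varphi,c)$ with $w\in W$, $\varphi\in\mathrm{Sub}(\varphi_0)$, $c:\mathrm{Sub}_{\mu\nu}(\varphi_0)\to\{\gamma\mid\gamma\le\Gamma\}$; initial position $(w_0,\varphi_0,c_0)$ with $c_0\equiv\Gamma$. Rules: at $(w,p,c)$ Eloise wins iff $w\in V(p)$, else Abelard wins; at $(w,\neg p,c)$ Eloise wins iff $w\notin V(p)$, else Abelard; at $(w,\psi\vee\theta,c)$ Eloise picks $(w,\psi,c)$ or $(w,\theta,c)$;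 at $(w,\psi\wedge\theta,c)$ Abelard picks; at $(w,\Diamond\psi,c)$ Eloise picks $v$ with $wRv$, next $(v,\psi,c)$, and Abelard wins if there is none; at $(w,\Box\psi,c)$ Abelard picks $v$ with $wRv$, next $(v,\psi,c)$, and Eloise wins if there is none; at $(w,\mu X\psi,c)$ Eloise picks $\gamma<\Gamma$, next $(w,\psi,c[\gamma/\mu X\psi])$; at $(w,\nu X\psi,c)$ Abelard picks $\gamma<\Gamma$, next $(w,\psi,c[\gamma/\nu X\psi])$. At $(w,X,c)$ with $\gamma=c(\mathrm{rf}(X))$: if $\mathrm{rf}(X)=\mu X\psi$, then Abelard wins if $\gamma=0$, otherwise Eloise picks $\gamma'<\gamma$ and play moves to $(w,\psi,c')$ with $c'(\mu X\psi)=\gamma'$, $c'(\theta)=\Gamma$ for all $\theta\in\mathrm{Sub}_{\mu\nu}(\varphi_0)$ occurring inside $\psi$, and $c'(\theta)=c(\theta)$ otherwise; if $\mathrm{rf}(X)=\nu X\psi$, symmetrically Eloise wins if $\gamma=0$, otherwise Abelard picks $\gamma'<\gamma$ with the same clock update. A strategy for Eloise is a partial function on positions giving her choice at each position where she must move; it is winning if she can always follow it and wins every play in which she follows it. $\mathcal{M},w_0\Vdash^\Gamma\varphi_0$ iff Eloise has a winning strategy in $(\mathcal{M},w_0,\varphi_0,\Gamma)$. *)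

theory Defs
  imports Main "HOL-Library.Sublist"
begin

datatype ('p, 'l) fml =
    Prop 'p | NProp 'p | Var 'l
  | Or "('p, 'l) fml" "('p, 'l) fml" | And "('p, 'l) fml" "('p, 'l) fml"
  | Dia "('p, 'l) fml" | Box "('p, 'l) fml"
  | Mu 'l "('p, 'l) fml" | Nu 'l "('p, 'l) fml"

text \<open>Occurrences (nodes of the syntax tree) are addressed by positions (paths):
  child 0 / 1 of a binary connective, child 0 of a unary one.\<close>

fun subf :: "('p, 'l) fml \<Rightarrow> nat list \<Rightarrow> ('p, 'l) fml option" where
  "subf f [] = Some f"
| "subf (Or a b) (0 # p) = subf a p"
| "subf (Or a b) (Suc 0 # p) = subf b p"
| "subf (And a b) (0 # p) = subf a p"
| "subf (And a b) (Suc 0 # p) = subf b p"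
| "subf (Dia a) (0 # p) = subf a p"
| "subf (Box a) (0 # p) = subf a p"
| "subf (Mu X a) (0 # p) = subf a p"
| "subf (Nu X a) (0 # p) = subf a p"
| "subf _ _ = None"

definition Sub :: "('p, 'l) fml \<Rightarrow> nat list set" where
  "Sub f0 = {p. subf f0 p \<noteq> None}"

definition binds :: "('p, 'l) fml \<Rightarrow> 'l \<Rightarrow> nat list \<Rightarrow> bool" where
  "binds f0 X q \<longleftrightarrow> (\<exists>a. subf f0 q = Some (Mu X a) \<or> subf f0 q = Some (Nu X a))"

definition Sub_munu :: "('p, 'l) fml \<Rightarrow> nat list set" where
  "Sub_munu f0 = {q. \<exists>X. binds f0 X q}"

definition sentence :: "('p, 'l) fml \<Rightarrow> bool" where
  "sentence f0 \<longleftrightarrow>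
     (\<forall>p X. subf f0 p = Some (Var X) \<longrightarrow> (\<exists>q. strict_prefix q p \<and> binds f0 X q))"

definition normal_form :: "('p, 'l) fml \<Rightarrow> bool" where
  "normal_form f0 \<longleftrightarrow> (\<forall>X q1 q2. binds f0 X q1 \<and> binds f0 X q2 \<longrightarrow> q1 = q2)"

definition rf :: "('p, 'l) fml \<Rightarrow> nat list \<Rightarrow> 'l \<Rightarrow> nat list" where
  "rf f0 p X = (THE q. strict_prefix q p \<and> binds f0 X q \<and>
       (\<forall>q'. strict_prefix q' p \<and> binds f0 X q' \<longrightarrow> prefix q' q))"

definition ord_iter ::
  "'a set \<Rightarrow> ('a set \<Rightarrow> 'a set) \<Rightarrow> ('a set set \<Rightarrow> 'a set) \<Rightarrow> 'o::wellorder \<Rightarrow> 'a set" where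
  "ord_iter b F L = wfrec {(x, y). x < y}
     (\<lambda>rec \<gamma>. if (\<forall>\<delta>. \<not> \<delta> < \<gamma>) then b
             else if (\<exists>\<beta>. \<beta> < \<gamma> \<and> (\<forall>\<delta>. \<delta> < \<gamma> \<longrightarrow> \<delta> \<le> \<beta>))
             then F (rec (THE \<beta>. \<beta> < \<gamma> \<and> (\<forall>\<delta>. \<delta> < \<gamma> \<longrightarrow> \<delta> \<le> \<beta>)))
             else L (rec ` {\<delta>. \<delta> < \<gamma>}))"

definition iter_mu :: "('a set \<Rightarrow> 'a set) \<Rightarrow> 'o::wellorder \<Rightarrow> 'a set" where
  "iter_mu F = ord_iter {} F Union"

definition iter_nu :: "'a set \<Rightarrow> ('a set \<Rightarrow> 'a set) \<Rightarrow> 'o::wellorder \<Rightarrow> 'a set" where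
  "iter_nu W F = ord_iter W F Inter"

text \<open>Kripke model (W, R, V); den ... s f is the set of worlds w in W with M, w |=^Gamma_s f.\<close>
primrec den :: "'w set \<Rightarrow> ('w \<times> 'w) set \<Rightarrow> ('p \<Rightarrow> 'w set) \<Rightarrow> 'o::wellorder
                \<Rightarrow> ('l \<Rightarrow> 'w set) \<Rightarrow> ('p, 'l) fml \<Rightarrow> 'w set" where
  "den W R V \<Gamma> s (Prop p) = {w \<in> W. w \<in> V p}"
| "den W R V \<Gamma> s (NProp p) = {w \<in> W. w \<notin> V p}"
| "den W R V \<Gamma> s (Var X) = {w \<in> W. w \<in> s X}"
| "den W R V \<Gamma> s (Or a b) = den W R V \<Gamma> s a \<union> den W R V \<Gamma> s b"
| "den W R V \<Gamma> s (And a b) = den W R V \<Gamma> s a \<inter> den W R V \<Gamma> s b"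
| "den W R V \<Gamma> s (Dia a) = {w \<in> W. \<exists>v. (w, v) \<in> R \<and> v \<in> den W R V \<Gamma> s a}"
| "den W R V \<Gamma> s (Box a) = {w \<in> W. \<forall>v. (w, v) \<in> R \<longrightarrow> v \<in> den W R V \<Gamma> s a}"
| "den W R V \<Gamma> s (Mu X a) = iter_mu (\<lambda>A. den W R V \<Gamma> (s(X := A)) a) \<Gamma>"
| "den W R V \<Gamma> s (Nu X a) = iter_nu W (\<lambda>A. den W R V \<Gamma> (s(X := A)) a) \<Gamma>"

text \<open>Truth of a sentence (independent of the assignment; we use the empty one).\<close>
definition sat :: "'w set \<Rightarrow> ('w \<times> 'w) set \<Rightarrow> ('p \<Rightarrow> 'w set) \<Rightarrow> 'o::wellorder
                   \<Rightarrow> 'w \<Rightarrow> ('p, 'l) fml \<Rightarrow> bool" where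
  "sat W R V \<Gamma> w f0 \<longleftrightarrow> w \<in> den W R V \<Gamma> (\<lambda>_. {}) f0"

datatype player = Eloise | Abelard

datatype 'pos gnode = Win player | Turn player "'pos set"

type_synonym ('w, 'o) gpos = "'w \<times> nat list \<times> (nat list \<Rightarrow> 'o)"

text \<open>Clock update when moving from a variable back to the body of its binder at q.\<close>
definition reset :: "('p, 'l) fml \<Rightarrow> 'o \<Rightarrow> nat list \<Rightarrow> 'o \<Rightarrow> (nat list \<Rightarrow> 'o) \<Rightarrow> (nat list \<Rightarrow> 'o)" where
  "reset f0 \<Gamma> q \<gamma>' c = (\<lambda>\<theta>. if \<theta> = q then \<gamma>'
       else if \<theta> \<in> Sub_munu f0 \<and> prefix (q @ [0]) \<theta> then \<Gamma> else c \<theta>)"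

definition gnode :: "'w set \<Rightarrow> ('w \<times> 'w) set \<Rightarrow> ('p \<Rightarrow> 'w set) \<Rightarrow> 'o::wellorder
                     \<Rightarrow> ('p, 'l) fml \<Rightarrow> ('w, 'o) gpos \<Rightarrow> ('w, 'o) gpos gnode" where
  "gnode W R V \<Gamma> f0 x = (case x of (w, p, c) \<Rightarrow>
     (case subf f0 p of
        None \<Rightarrow> Win Abelard
      | Some (Prop q) \<Rightarrow> Win (if w \<in> V q then Eloise else Abelard)
      | Some (NProp q) \<Rightarrow> Win (if w \<notin> V q then Eloise else Abelard)
      | Some (Or a b) \<Rightarrow> Turn Eloise {(w, p @ [0], c), (w, p @ [1], c)}
      | Some (And a b) \<Rightarrow> Turn Abelard {(w, p @ [0], c), (w, p @ [1], c)}
      | Some (Dia a) \<Rightarrow> (if \<not> (\<exists>v. (w, v) \<in> R) then Win Abelard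
                         else Turn Eloise {(v, p @ [0], c) | v. (w, v) \<in> R})
      | Some (Box a) \<Rightarrow> (if \<not> (\<exists>v. (w, v) \<in> R) then Win Eloise
                         else Turn Abelard {(v, p @ [0], c) | v. (w, v) \<in> R})
      | Some (Mu X a) \<Rightarrow> Turn Eloise {(w, p @ [0], c(p := \<gamma>)) | \<gamma>. \<gamma> < \<Gamma>}
      | Some (Nu X a) \<Rightarrow> Turn Abelard {(w, p @ [0], c(p := \<gamma>)) | \<gamma>. \<gamma> < \<Gamma>}
      | Some (Var X) \<Rightarrow>
          (let q = rf f0 p X; \<gamma> = c q in
           (case subf f0 q of
              Some (Mu Y b) \<Rightarrow> (if \<not> (\<exists>\<delta>. \<delta> < \<gamma>) then Win Abelard
                  else Turn Eloise {(w, q @ [0], reset f0 \<Gamma> q \<gamma>' c) | \<gamma>'. \<gamma>' < \<gamma>})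
            | Some (Nu Y b) \<Rightarrow> (if \<not> (\<exists>\<delta>. \<delta> < \<gamma>) then Win Eloise
                  else Turn Abelard {(w, q @ [0], reset f0 \<Gamma> q \<gamma>' c) | \<gamma>'. \<gamma>' < \<gamma>})
            | _ \<Rightarrow> Win Abelard))))"

definition cmove :: "('w, 'o) gpos gnode \<Rightarrow> (('w, 'o) gpos \<Rightarrow> ('w, 'o) gpos option)
                     \<Rightarrow> ('w, 'o) gpos \<Rightarrow> ('w, 'o) gpos \<Rightarrow> bool" where
  "cmove nd \<sigma> x y \<longleftrightarrow> (case nd of
      Turn Eloise S \<Rightarrow> \<sigma> x = Some y \<and> y \<in> S
    | Turn Abelard S \<Rightarrow> y \<in> S
    | Win _ \<Rightarrow> False)"

definition init_pos :: "'o \<Rightarrow> 'w \<Rightarrow> ('w, 'o) gpos" where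
  "init_pos \<Gamma> w0 = (w0, [], \<lambda>_. \<Gamma>)"

definition winning_strategy :: "'w set \<Rightarrow> ('w \<times> 'w) set \<Rightarrow> ('p \<Rightarrow> 'w set) \<Rightarrow> 'o::wellorder
      \<Rightarrow> 'w \<Rightarrow> ('p, 'l) fml \<Rightarrow> (('w, 'o) gpos \<Rightarrow> ('w, 'o) gpos option) \<Rightarrow> bool" where
  "winning_strategy W R V \<Gamma> w0 f0 \<sigma> \<longleftrightarrow>
     (let step = (\<lambda>x y. cmove (gnode W R V \<Gamma> f0 x) \<sigma> x y) in
      (\<forall>x. step\<^sup>*\<^sup>* (init_pos \<Gamma> w0) x \<longrightarrow>
          (case gnode W R V \<Gamma> f0 x of
             Turn Eloise S \<Rightarrow> (\<exists>y. \<sigma> x = Some y \<and> y \<in> S)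
           | Turn Abelard S \<Rightarrow> True
           | Win pl \<Rightarrow> pl = Eloise))
      \<and> \<not> (\<exists>f. f 0 = init_pos \<Gamma> w0 \<and> (\<forall>n. step (f n) (f (Suc n)))))"

definition eloise_wins :: "'w set \<Rightarrow> ('w \<times> 'w) set \<Rightarrow> ('p \<Rightarrow> 'w set) \<Rightarrow> 'o::wellorder
      \<Rightarrow> 'w \<Rightarrow> ('p, 'l) fml \<Rightarrow> bool" where
  "eloise_wins W R V \<Gamma> w0 f0 \<longleftrightarrow> (\<exists>\<sigma>. winning_strategy W R V \<Gamma> w0 f0 \<sigma>)"

end

theory Submission
  imports Defs
begin

text \<open>Label a position (w, p, c) true if w satisfies the subformula at p in the assignment
  that interprets every binder above p by the approximant of its fixpoint indexed by its current
  clock. Since the approximant at stage \<gamma> is the union (for \<nu>: the intersection, within W) of the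
  body applied to the approximants below \<gamma>, this labelling is consistent with the rules of the
  game: an Eloise position is true iff some successor is, an Abelard position iff all successors
  are. The clocks of the binders on the current path decrease lexicographically, so every play
  is finite. In such a game a consistent labelling marks exactly Eloise's winning positions: she
  wins by staying on true positions, and from a false position Abelard can stay on false ones,
  which would produce an infinite play.\<close>

section \<open>Transfinite iteration\<close>

lemma bottom_succ_limit_cases:
  fixes \<gamma> :: "'o::wellorder"
  obtains (bottom) "\<forall>\<delta>. \<not> \<delta> < \<gamma>"
  | (succ) \<beta> where "\<beta> < \<gamma>" "\<forall>\<delta><\<gamma>. \<delta> \<le> \<beta>"
  | (limit) "\<exists>\<delta>. \<delta> < \<gamma>" "\<forall>\<beta><\<gamma>. \<exists>\<delta><\<gamma>. \<beta> < \<delta>"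
  by (meson not_le)

lemma ord_iter_unfold:
  "ord_iter b F L (\<gamma>::'o::wellorder) = (if (\<forall>\<delta>. \<not> \<delta> < \<gamma>) then b
     else if (\<exists>\<beta>. \<beta> < \<gamma> \<and> (\<forall>\<delta>. \<delta> < \<gamma> \<longrightarrow> \<delta> \<le> \<beta>))
     then F (ord_iter b F L (THE \<beta>. \<beta> < \<gamma> \<and> (\<forall>\<delta>. \<delta> < \<gamma> \<longrightarrow> \<delta> \<le> \<beta>)))
     else L (ord_iter b F L ` {\<delta>. \<delta> < \<gamma>}))"
proof -
  have "(THE \<beta>. \<beta> < \<gamma> \<and> (\<forall>\<delta><\<gamma>. \<delta> \<le> \<beta>)) < \<gamma>" if "\<exists>\<beta>. \<beta> < \<gamma> \<and> (\<forall>\<delta><\<gamma>. \<delta> \<le> \<beta>)"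
    using that by (rule exE) (rule theI2, auto intro: order.antisym)
  then show ?thesis
    unfolding ord_iter_def by (subst wfrec[OF wf]) (auto simp: cut_apply intro!: arg_cong[where f=L] image_cong)
qed

lemma ord_iter_bottom: "\<forall>\<delta>. \<not> \<delta> < \<gamma> \<Longrightarrow> ord_iter b F L (\<gamma>::'o::wellorder) = b"
  by (subst ord_iter_unfold) simp

lemma ord_iter_succ:
  assumes "\<beta> < (\<gamma>::'o::wellorder)" "\<forall>\<delta><\<gamma>. \<delta> \<le> \<beta>"
  shows "ord_iter b F L \<gamma> = F (ord_iter b F L \<beta>)"
proof -
  have "(THE \<beta>. \<beta> < \<gamma> \<and> (\<forall>\<delta><\<gamma>. \<delta> \<le> \<beta>)) = \<beta>"
    using assms by (blast intro: order.antisym)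
  moreover have "\<not> (\<forall>\<delta>. \<not> \<delta> < \<gamma>)" "\<exists>\<beta>. \<beta> < \<gamma> \<and> (\<forall>\<delta><\<gamma>. \<delta> \<le> \<beta>)"
    using assms by blast+
  ultimately show ?thesis
    by (subst ord_iter_unfold) (simp only: if_False if_True)
qed

lemma ord_iter_limit:
  assumes "\<exists>\<delta>. \<delta> < (\<gamma>::'o::wellorder)" "\<forall>\<beta><\<gamma>. \<exists>\<delta><\<gamma>. \<beta> < \<delta>"
  shows "ord_iter b F L \<gamma> = L (ord_iter b F L ` {\<delta>. \<delta> < \<gamma>})"
proof -
  have "\<not> (\<forall>\<delta>. \<not> \<delta> < \<gamma>)" "\<not> (\<exists>\<beta>. \<beta> < \<gamma> \<and> (\<forall>\<delta><\<gamma>. \<delta> \<le> \<beta>))"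
    using assms by (auto simp: not_le)
  then show ?thesis
    by (subst ord_iter_unfold) (simp only: if_False)
qed

lemma ord_iter_invariant:
  assumes "P b" "\<And>A. P (F A)" "\<And>S. S \<noteq> {} \<Longrightarrow> \<forall>A\<in>S. P A \<Longrightarrow> P (L S)"
  shows "P (ord_iter b F L (\<gamma>::'o::wellorder))"
proof (induction \<gamma> rule: less_induct)
  case (less \<gamma>)
  then show ?case
    by (subst ord_iter_unfold) (auto intro: assms)
qed

lemma iter_mu_eq_UN:
  assumes "mono F"
  shows "iter_mu F (\<gamma>::'o::wellorder) = (\<Union>\<delta>\<in>{\<delta>. \<delta> < \<gamma>}. F (iter_mu F \<delta>))"
proof (induction \<gamma> rule: less_induct)
  case (less \<gamma>)
  let ?I = "iter_mu F"
  from bottom_succ_limit_cases[of \<gamma>] show ?case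
  proof cases
    case bottom
    then show ?thesis unfolding iter_mu_def by (simp add: ord_iter_bottom)
  next
    case (succ \<beta>)
    have "?I \<delta> \<subseteq> ?I \<beta>" if "\<delta> < \<gamma>" for \<delta>
      using that succ less.IH[of \<delta>] less.IH[of \<beta>] by (fastforce intro: less_le_trans)
    then have "F (?I \<delta>) \<subseteq> F (?I \<beta>)" if "\<delta> < \<gamma>" for \<delta>
      using that assms by (blast dest: monoD)
    then show ?thesis
      using succ unfolding iter_mu_def by (auto simp: ord_iter_succ)
  next
    case limit
    have "?I \<gamma> = (\<Union>\<delta>\<in>{\<delta>. \<delta> < \<gamma>}. ?I \<delta>)"
      using limit unfolding iter_mu_def by (simp add: ord_iter_limit)
    also have "\<dots> = (\<Union>\<delta>\<in>{\<delta>. \<delta> < \<gamma>}. F (?I \<delta>))"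
    proof (intro antisym subsetI)
      fix x assume "x \<in> (\<Union>\<delta>\<in>{\<delta>. \<delta> < \<gamma>}. ?I \<delta>)"
      then obtain \<delta> \<epsilon> where "\<delta> < \<gamma>" "\<epsilon> < \<delta>" "x \<in> F (?I \<epsilon>)"
        using less.IH by blast
      then show "x \<in> (\<Union>\<delta>\<in>{\<delta>. \<delta> < \<gamma>}. F (?I \<delta>))"
        using less_trans by blast
    next
      fix x assume "x \<in> (\<Union>\<delta>\<in>{\<delta>. \<delta> < \<gamma>}. F (?I \<delta>))"
      then obtain \<epsilon> \<delta> where "\<epsilon> < \<delta>" "\<delta> < \<gamma>" "x \<in> F (?I \<epsilon>)"
        using limit(2) by blast
      then show "x \<in> (\<Union>\<delta>\<in>{\<delta>. \<delta> < \<gamma>}. ?I \<delta>)"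
        using less.IH by blast
    qed
    finally show ?thesis .
  qed
qed

lemma iter_nu_eq_INT:
  assumes "mono F" "\<And>A. F A \<subseteq> W"
  shows "iter_nu W F (\<gamma>::'o::wellorder) = W \<inter> (\<Inter>\<delta>\<in>{\<delta>. \<delta> < \<gamma>}. F (iter_nu W F \<delta>))"
proof (induction \<gamma> rule: less_induct)
  case (less \<gamma>)
  let ?I = "iter_nu W F"
  from bottom_succ_limit_cases[of \<gamma>] show ?case
  proof cases
    case bottom
    then show ?thesis unfolding iter_nu_def by (simp add: ord_iter_bottom)
  next
    case (succ \<beta>)
    have "?I \<beta> \<subseteq> ?I \<delta>" if "\<delta> < \<gamma>" for \<delta>
      using that succ less.IH[of \<delta>] less.IH[of \<beta>] by (fastforce intro: less_le_trans)
    then have "F (?I \<beta>) \<subseteq> F (?I \<delta>)" if "\<delta> < \<gamma>" for \<delta>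
      using that assms(1) by (blast dest: monoD)
    moreover have "F (?I \<beta>) \<subseteq> W"
      by (rule assms(2))
    ultimately show ?thesis
      using succ unfolding iter_nu_def by (auto simp: ord_iter_succ)
  next
    case limit
    have "?I \<gamma> = (\<Inter>\<delta>\<in>{\<delta>. \<delta> < \<gamma>}. ?I \<delta>)"
      using limit unfolding iter_nu_def by (simp add: ord_iter_limit)
    also have "\<dots> = W \<inter> (\<Inter>\<delta>\<in>{\<delta>. \<delta> < \<gamma>}. F (?I \<delta>))"
    proof (intro antisym subsetI)
      fix x assume x: "x \<in> (\<Inter>\<delta>\<in>{\<delta>. \<delta> < \<gamma>}. ?I \<delta>)"
      have "x \<in> W"
        using x limit(1) less.IH by blast
      moreover have "x \<in> F (?I \<epsilon>)" if \<epsilon>: "\<epsilon> < \<gamma>" for \<epsilon>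
      proof -
        obtain \<delta> where "\<epsilon> < \<delta>" "\<delta> < \<gamma>"
          using limit(2) \<epsilon> by blast
        then show ?thesis
          using x less.IH by blast
      qed
      ultimately show "x \<in> W \<inter> (\<Inter>\<delta>\<in>{\<delta>. \<delta> < \<gamma>}. F (?I \<delta>))"
        by blast
    next
      fix x assume "x \<in> W \<inter> (\<Inter>\<delta>\<in>{\<delta>. \<delta> < \<gamma>}. F (?I \<delta>))"
      then show "x \<in> (\<Inter>\<delta>\<in>{\<delta>. \<delta> < \<gamma>}. ?I \<delta>)"
        using less.IH by (blast intro: less_trans)
    qed
    finally show ?thesis .
  qed
qed

lemma mem_iter_mu_iff:
  "mono F \<Longrightarrow> w \<in> iter_mu F (\<gamma>::'o::wellorder) \<longleftrightarrow> (\<exists>\<delta><\<gamma>. w \<in> F (iter_mu F \<delta>))"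
  by (subst iter_mu_eq_UN) auto

lemma mem_iter_nu_iff:
  "mono F \<Longrightarrow> (\<And>A. F A \<subseteq> W) \<Longrightarrow> w \<in> W \<Longrightarrow>
     w \<in> iter_nu W F (\<gamma>::'o::wellorder) \<longleftrightarrow> (\<forall>\<delta><\<gamma>. w \<in> F (iter_nu W F \<delta>))"
  by (subst iter_nu_eq_INT) auto

lemma iter_mu_mono:
  assumes "mono F" "mono G" "\<And>A. F A \<subseteq> G A"
  shows "iter_mu F (\<gamma>::'o::wellorder) \<subseteq> iter_mu G \<gamma>"
proof (induction \<gamma> rule: less_induct)
  case (less \<gamma>)
  have "F (iter_mu F \<delta>) \<subseteq> G (iter_mu G \<delta>)" if "\<delta> < \<gamma>" for \<delta>
    using assms(3) monoD[OF assms(2) less.IH[OF that]] by blast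
  then show ?case
    by (subst (1 2) iter_mu_eq_UN) (use assms(1,2) in auto)
qed

lemma iter_nu_mono:
  assumes "mono F" "mono G" "\<And>A. F A \<subseteq> G A" "\<And>A. F A \<subseteq> W" "\<And>A. G A \<subseteq> W"
  shows "iter_nu W F (\<gamma>::'o::wellorder) \<subseteq> iter_nu W G \<gamma>"
proof (induction \<gamma> rule: less_induct)
  case (less \<gamma>)
  have "F (iter_nu W F \<delta>) \<subseteq> G (iter_nu W G \<delta>)" if "\<delta> < \<gamma>" for \<delta>
    using assms(3) monoD[OF assms(2) less.IH[OF that]] by blast
  then show ?case
    by (subst (1 2) iter_nu_eq_INT) (use assms in blast)+
qed

lemma den_subset:
  assumes "\<forall>p. V p \<subseteq> W"
  shows "den W R V \<Gamma> s f \<subseteq> W"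
proof (induction f arbitrary: s)
  case (Mu X f)
  show ?case
    unfolding den.simps iter_mu_def by (rule ord_iter_invariant) (use Mu in blast)+
next
  case (Nu X f)
  show ?case
    unfolding den.simps iter_nu_def by (rule ord_iter_invariant) (use Nu in blast)+
qed (use assms in auto)

lemma den_mono:
  assumes "\<forall>p. V p \<subseteq> W" "s \<le> s'"
  shows "den W R V \<Gamma> s f \<subseteq> den W R V \<Gamma> s' f"
  using assms(2)
proof (induction f arbitrary: s s')
  have upd: "t(X := A) \<le> t'(X := B)" if "t \<le> t'" "A \<subseteq> B" for t t' :: "'l \<Rightarrow> 'w set" and X A B
    using that by (simp add: le_fun_def)
  {
    case (Mu X f)
    have "mono (\<lambda>A. den W R V \<Gamma> (t(X := A)) f)" for t
      by (intro monoI Mu.IH upd order_refl)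
    moreover have "den W R V \<Gamma> (s(X := A)) f \<subseteq> den W R V \<Gamma> (s'(X := A)) f" for A
      by (intro Mu.IH upd Mu.prems order_refl)
    ultimately show ?case
      by (simp add: iter_mu_mono)
  next
    case (Nu X f)
    have "mono (\<lambda>A. den W R V \<Gamma> (t(X := A)) f)" for t
      by (intro monoI Nu.IH upd order_refl)
    moreover have "den W R V \<Gamma> (s(X := A)) f \<subseteq> den W R V \<Gamma> (s'(X := A)) f" for A
      by (intro Nu.IH upd Nu.prems order_refl)
    ultimately show ?case
      by (simp add: iter_nu_mono den_subset[OF assms(1)])
  }
next
  case (Dia f)
  then show ?case by (simp, blast)
next
  case (Box f)
  then show ?case by (simp, blast)
qed (simp_all add: le_fun_def, blast+)

lemma mono_den_upd: "\<forall>p. V p \<subseteq> W \<Longrightarrow> mono (\<lambda>A. den W R V \<Gamma> (s(X := A)) f)"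
  by (rule monoI) (simp add: den_mono le_fun_def)

lemma subf_append: "subf f (p @ q) = (case subf f p of None \<Rightarrow> None | Some g \<Rightarrow> subf g q)"
  by (induction f p rule: subf.induct) auto

lemma subf_length: "subf f p \<noteq> None \<Longrightarrow> length p \<le> size f"
  by (induction f p rule: subf.induct) auto

lemma strict_prefix_take: "k < length p \<Longrightarrow> strict_prefix (take k p) p"
  by (metis append_take_drop_id length_take min.absorb4 nat_neq_iff prefix_def strict_prefix_def)

lemma map_upt_in_lex:
  assumes "i < n" "\<forall>k<i. f k = g k" "(f i, g i) \<in> r"
  shows "(map f [0..<n], map g [0..<n]) \<in> lex r"
proof -
  have upt: "[0..<n] = [0..<i] @ i # [Suc i..<n]"
    using assms(1) by (metis less_imp_add_positive upt_add_eq_append upt_conv_Cons zero_le)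
  have "map f [0..<n] = map f [0..<i] @ f i # map f [Suc i..<n]"
    "map g [0..<n] = map f [0..<i] @ g i # map g [Suc i..<n]"
    using assms(2) unfolding upt by simp_all
  moreover have "(map f [0..<i] @ f i # map f [Suc i..<n], map f [0..<i] @ g i # map g [Suc i..<n]) \<in> lex r"
    using assms(3) by (auto simp: lex_conv)
  ultimately show ?thesis
    by simp
qed

section \<open>Games with a consistent labelling\<close>

definition game_move :: "('pos \<Rightarrow> 'pos gnode) \<Rightarrow> 'pos \<Rightarrow> 'pos \<Rightarrow> bool" where
  "game_move nd x y \<longleftrightarrow> (\<exists>pl S. nd x = Turn pl S \<and> y \<in> S)"

definition locally_consistent :: "('pos \<Rightarrow> 'pos gnode) \<Rightarrow> ('pos \<Rightarrow> bool) \<Rightarrow> 'pos \<Rightarrow> bool" where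
  "locally_consistent nd L x \<longleftrightarrow> (case nd x of
      Win pl \<Rightarrow> (L x \<longleftrightarrow> pl = Eloise)
    | Turn Eloise S \<Rightarrow> (L x \<longleftrightarrow> (\<exists>y\<in>S. L y))
    | Turn Abelard S \<Rightarrow> (L x \<longleftrightarrow> (\<forall>y\<in>S. L y)))"

definition strategy_sound_at :: "('pos \<Rightarrow> 'pos gnode) \<Rightarrow> ('pos \<Rightarrow> 'pos option) \<Rightarrow> 'pos \<Rightarrow> bool" where
  "strategy_sound_at nd \<sigma> x \<longleftrightarrow> (case nd x of
      Turn Eloise S \<Rightarrow> (\<exists>y. \<sigma> x = Some y \<and> y \<in> S)
    | Turn Abelard S \<Rightarrow> True
    | Win pl \<Rightarrow> pl = Eloise)"

definition strategy_wins :: "(('w, 'o) gpos \<Rightarrow> ('w, 'o) gpos gnode) \<Rightarrow> ('w, 'o) gpos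
      \<Rightarrow> (('w, 'o) gpos \<Rightarrow> ('w, 'o) gpos option) \<Rightarrow> bool" where
  "strategy_wins nd x0 \<sigma> \<longleftrightarrow>
     (\<forall>x. (\<lambda>x y. cmove (nd x) \<sigma> x y)\<^sup>*\<^sup>* x0 x \<longrightarrow> strategy_sound_at nd \<sigma> x)
     \<and> \<not> (\<exists>f. f 0 = x0 \<and> (\<forall>n. cmove (nd (f n)) \<sigma> (f n) (f (Suc n))))"

lemma winning_strategy_iff_strategy_wins:
  "winning_strategy W R V \<Gamma> w0 f0 \<sigma> \<longleftrightarrow> strategy_wins (gnode W R V \<Gamma> f0) (init_pos \<Gamma> w0) \<sigma>"
  by (simp add: winning_strategy_def strategy_wins_def strategy_sound_at_def)

lemma cmove_game_move: "cmove (nd x) \<sigma> x y \<Longrightarrow> game_move nd x y"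
  by (auto simp: cmove_def game_move_def split: gnode.splits player.splits)

lemma consistent_labelling_strategy_wins:
  assumes wf: "wf {(y, x). game_move nd x y}"
    and inv: "I x0" "\<And>x y. I x \<Longrightarrow> game_move nd x y \<Longrightarrow> I y"
    and consistent: "\<And>x. I x \<Longrightarrow> locally_consistent nd L x"
    and "L x0"
  shows "\<exists>\<sigma>. strategy_wins nd x0 \<sigma>"
proof
  define \<sigma> where "\<sigma> x = (case nd x of Turn Eloise S \<Rightarrow> Some (SOME y. y \<in> S \<and> L y) | _ \<Rightarrow> None)" for x
  let ?step = "\<lambda>x y. cmove (nd x) \<sigma> x y"
  have local_win: "case nd x of
             Turn Eloise S \<Rightarrow> (\<exists>y. \<sigma> x = Some y \<and> y \<in> S \<and> L y)
           | Turn Abelard S \<Rightarrow> (\<forall>y\<in>S. L y)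
           | Win pl \<Rightarrow> pl = Eloise" if "I x" "L x" for x
    using consistent[OF that(1)] that(2) unfolding locally_consistent_def \<sigma>_def
    by (auto split: gnode.splits player.splits intro: someI2_ex)
  have reachable: "I x \<and> L x" if "?step\<^sup>*\<^sup>* x0 x" for x
    using that
  proof (induction rule: rtranclp_induct)
    case base
    then show ?case using inv(1) \<open>L x0\<close> by blast
  next
    case (step x y)
    then have "L y"
      using local_win[of x] unfolding cmove_def by (auto split: gnode.splits player.splits)
    then show ?case
      using step inv(2) cmove_game_move by blast
  qed
  have "\<not> (\<exists>f. \<forall>n. game_move nd (f n) (f (Suc n)))"
    using wf unfolding wf_iff_no_infinite_down_chain by blast
  then have "\<not> (\<exists>f. f 0 = x0 \<and> (\<forall>n. ?step (f n) (f (Suc n))))"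
    using cmove_game_move by blast
  moreover have "strategy_sound_at nd \<sigma> x" if "?step\<^sup>*\<^sup>* x0 x" for x
    using local_win[of x] reachable[OF that] unfolding strategy_sound_at_def
    by (auto split: gnode.splits player.splits)
  ultimately show "strategy_wins nd x0 \<sigma>"
    unfolding strategy_wins_def by blast
qed

lemma strategy_wins_consistent_labelling:
  assumes inv: "I x0" "\<And>x y. I x \<Longrightarrow> game_move nd x y \<Longrightarrow> I y"
    and consistent: "\<And>x. I x \<Longrightarrow> locally_consistent nd L x"
    and wins: "strategy_wins nd x0 \<sigma>"
  shows "L x0"
proof (rule ccontr)
  let ?step = "\<lambda>x y. cmove (nd x) \<sigma> x y"
  define P where "P x \<longleftrightarrow> ?step\<^sup>*\<^sup>* x0 x \<and> \<not> L x" for x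
  assume "\<not> L x0"
  then have "P x0"
    unfolding P_def by simp
  moreover have "\<exists>y. ?step x y \<and> P y" if "P x" for x
  proof -
    have reach: "?step\<^sup>*\<^sup>* x0 x" and "\<not> L x"
      using that unfolding P_def by auto
    have "I x"
      using reach by (induction rule: rtranclp_induct) (auto intro: inv cmove_game_move)
    moreover have "strategy_sound_at nd \<sigma> x"
      using wins reach unfolding strategy_wins_def by blast
    ultimately have "\<exists>y. ?step x y \<and> \<not> L y"
      using consistent[of x] \<open>\<not> L x\<close> unfolding locally_consistent_def strategy_sound_at_def cmove_def
      by (auto split: gnode.splits player.splits)
    then show ?thesis
      using reach unfolding P_def by (meson rtranclp.rtrancl_into_rtrancl)
  qed
  ultimately obtain f where "f 0 = x0" "\<forall>n. ?step (f n) (f (Suc n))"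
    using dependent_nat_choice[where P="\<lambda>n x. P x \<and> (n = 0 \<longrightarrow> x = x0)" and Q="\<lambda>n x y. ?step x y"]
    by blast
  then show False
    using wins unfolding strategy_wins_def by blast
qed

lemma consistent_labelling_iff_strategy_wins:
  assumes "wf {(y, x). game_move nd x y}"
    and "I x0" "\<And>x y. I x \<Longrightarrow> game_move nd x y \<Longrightarrow> I y"
    and "\<And>x. I x \<Longrightarrow> locally_consistent nd L x"
  shows "L x0 \<longleftrightarrow> (\<exists>\<sigma>. strategy_wins nd x0 \<sigma>)"
  using consistent_labelling_strategy_wins[of nd I x0 L] strategy_wins_consistent_labelling[of I x0 nd L]
    assms by blast

section \<open>The bounded evaluation game\<close>

locale evaluation_game =
  fixes W :: "'w set" and R :: "('w \<times> 'w) set" and V :: "'p \<Rightarrow> 'w set"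
    and \<Gamma> :: "'o::wellorder" and f0 :: "('p, 'l) fml"
  assumes R_subset: "R \<subseteq> W \<times> W" and V_subset: "\<forall>p. V p \<subseteq> W"
    and sentence: "sentence f0" and normal_form: "normal_form f0"
begin

abbreviation body_fun :: "('l \<Rightarrow> 'w set) \<Rightarrow> 'l \<Rightarrow> ('p, 'l) fml \<Rightarrow> 'w set \<Rightarrow> 'w set" where
  "body_fun E X a \<equiv> \<lambda>A. den W R V \<Gamma> (E(X := A)) a"

lemma mono_body_fun: "mono (body_fun E X a)"
  by (rule mono_den_upd[OF V_subset])

lemma body_fun_subset: "body_fun E X a A \<subseteq> W"
  by (rule den_subset[OF V_subset])

text \<open>Under clocks c, the subformula at position p is evaluated in the assignment env c p, in
  which every binder on the path to p binds its variable to the approximant of its fixpoint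
  indexed by its clock.\<close>

definition env_step :: "(nat list \<Rightarrow> 'o) \<Rightarrow> nat list \<Rightarrow> ('l \<Rightarrow> 'w set) \<Rightarrow> 'l \<Rightarrow> 'w set" where
  "env_step c q E = (case subf f0 q of
      Some (Mu X a) \<Rightarrow> E(X := iter_mu (body_fun E X a) (c q))
    | Some (Nu X a) \<Rightarrow> E(X := iter_nu W (body_fun E X a) (c q))
    | _ \<Rightarrow> E)"

definition env :: "(nat list \<Rightarrow> 'o) \<Rightarrow> nat list \<Rightarrow> 'l \<Rightarrow> 'w set" where
  "env c p = foldl (\<lambda>E k. env_step c (take k p) E) (\<lambda>_. {}) [0..<length p]"

lemma env_Nil: "env c [] = (\<lambda>_. {})"
  by (simp add: env_def)

lemma env_snoc: "env c (p @ [i]) = env_step c p (env c p)"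
proof -
  have "foldl (\<lambda>E k. env_step c (take k (p @ [i])) E) E0 [0..<length p]
      = foldl (\<lambda>E k. env_step c (take k p) E) E0 [0..<length p]" for E0
    by (rule foldl_cong) simp_all
  then show ?thesis
    by (simp add: env_def)
qed

lemma env_cong:
  assumes "\<forall>r. strict_prefix r p \<longrightarrow> c' r = c r"
  shows "env c' p = env c p"
proof -
  have "env_step c' (take k p) E = env_step c (take k p) E" if "k < length p" for k E
  proof -
    have "c' (take k p) = c (take k p)"
      using assms strict_prefix_take[OF that] by blast
    then show ?thesis
      by (simp add: env_step_def split: option.split fml.split)
  qed
  then show ?thesis
    unfolding env_def by (intro foldl_cong) auto
qed

lemma env_step_unbound: "\<not> binds f0 X q \<Longrightarrow> env_step c q E X = E X"
  by (auto simp: env_step_def binds_def split: option.split fml.split)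

lemma env_step_nonbinder: "q \<notin> Sub_munu f0 \<Longrightarrow> env_step c q E = E"
  by (auto simp: env_step_unbound Sub_munu_def)

lemma env_Mu_body:
  "subf f0 q = Some (Mu X a) \<Longrightarrow> env c (q @ [0]) = (env c q)(X := iter_mu (body_fun (env c q) X a) (c q))"
  by (simp add: env_snoc env_step_def)

lemma env_Nu_body:
  "subf f0 q = Some (Nu X a) \<Longrightarrow> env c (q @ [0]) = (env c q)(X := iter_nu W (body_fun (env c q) X a) (c q))"
  by (simp add: env_snoc env_step_def)

lemma env_append_unbound:
  "(\<And>t'. strict_prefix t' t \<Longrightarrow> \<not> binds f0 X (u @ t')) \<Longrightarrow> env c (u @ t) X = env c u X"
proof (induction t rule: rev_induct)
  case (snoc i t)
  then have "env c (u @ t) X = env c u X"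
    by (meson prefix_order.dual_order.strict_trans prefix_snoc strict_prefixI')
  then show ?case
    using snoc.prems[of t] env_snoc[of c "u @ t" i] by (simp add: env_step_unbound strict_prefixI')
qed simp

lemma binds_unique: "binds f0 X q \<Longrightarrow> binds f0 X q' \<Longrightarrow> q = q'"
  using normal_form unfolding normal_form_def by blast

lemma rf_binds:
  assumes "subf f0 p = Some (Var X)"
  shows "strict_prefix (rf f0 p X) p" "binds f0 X (rf f0 p X)"
proof -
  obtain q where q: "strict_prefix q p" "binds f0 X q"
    using sentence assms unfolding sentence_def by blast
  have "rf f0 p X = q"
    unfolding rf_def by (rule the_equality) (use q binds_unique in auto)
  then show "strict_prefix (rf f0 p X) p" "binds f0 X (rf f0 p X)"
    using q by simp_all
qed

lemma env_Var:
  assumes "subf f0 p = Some (Var X)"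
  shows "env c p X = env c (rf f0 p X @ [0]) X"
proof -
  define q where "q = rf f0 p X"
  have "strict_prefix q p" and bq: "binds f0 X q"
    using rf_binds[OF assms] unfolding q_def by auto
  from \<open>strict_prefix q p\<close> obtain j t where p: "p = q @ j # t"
    by (rule strict_prefixE')
  obtain b where "subf f0 q = Some (Mu X b) \<or> subf f0 q = Some (Nu X b)"
    using bq unfolding binds_def by blast
  moreover have "subf f0 (q @ j # t) = Some (Var X)"
    using assms p by simp
  ultimately have "subf (Mu X b) (j # t) \<noteq> None \<or> subf (Nu X b) (j # t) \<noteq> None"
    by (metis option.distinct(1) option.simps(5) subf_append)
  then have "j = 0"
    by (cases j) auto
  have "\<not> binds f0 X ((q @ [0]) @ t')" for t'
  proof
    assume "binds f0 X ((q @ [0]) @ t')"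
    then have "q = (q @ [0]) @ t'"
      by (rule binds_unique[OF bq])
    then show False
      using arg_cong[of _ _ length] by fastforce
  qed
  then have "env c ((q @ [0]) @ t) X = env c (q @ [0]) X"
    by (intro env_append_unbound)
  then have "env c p X = env c (q @ [0]) X"
    using p \<open>j = 0\<close> by simp
  then show ?thesis
    by (simp add: q_def)
qed

definition true_at :: "('w, 'o) gpos \<Rightarrow> bool" where
  "true_at x = (case x of (w, p, c) \<Rightarrow>
     (case subf f0 p of None \<Rightarrow> False | Some g \<Rightarrow> w \<in> den W R V \<Gamma> (env c p) g))"

lemma true_at_init: "true_at (init_pos \<Gamma> w0) \<longleftrightarrow> sat W R V \<Gamma> w0 f0"
  by (simp add: true_at_def init_pos_def sat_def env_Nil)

lemma true_at_child:
  assumes "subf f0 p = Some g" "p \<notin> Sub_munu f0" "subf g [i] = Some h"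
  shows "true_at (v, p @ [i], c) \<longleftrightarrow> v \<in> den W R V \<Gamma> (env c p) h"
  using assms by (simp add: true_at_def env_snoc env_step_nonbinder subf_append)

lemma true_at_Mu_body:
  assumes "subf f0 q = Some (Mu X a)" "\<forall>r. strict_prefix r q \<longrightarrow> c' r = c r"
  shows "true_at (v, q @ [0], c') \<longleftrightarrow>
    v \<in> body_fun (env c q) X a (iter_mu (body_fun (env c q) X a) (c' q))"
  using assms by (simp add: true_at_def env_Mu_body env_cong[OF assms(2)] subf_append)

lemma true_at_Nu_body:
  assumes "subf f0 q = Some (Nu X a)" "\<forall>r. strict_prefix r q \<longrightarrow> c' r = c r"
  shows "true_at (v, q @ [0], c') \<longleftrightarrow>
    v \<in> body_fun (env c q) X a (iter_nu W (body_fun (env c q) X a) (c' q))"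
  using assms by (simp add: true_at_def env_Nu_body env_cong[OF assms(2)] subf_append)

lemma reset_binder: "reset f0 \<Gamma> q \<gamma>' c q = \<gamma>'"
  by (simp add: reset_def)

lemma reset_strict_prefix: "strict_prefix r q \<Longrightarrow> reset f0 \<Gamma> q \<gamma>' c r = c r"
  unfolding reset_def using prefix_length_le[of "q @ [0]" r] prefix_length_le[of r q]
  by (auto dest: prefix_length_less)

lemma locally_consistent_Var:
  assumes w: "w \<in> W" and p: "subf f0 p = Some (Var X)"
  shows "locally_consistent (gnode W R V \<Gamma> f0) true_at (w, p, c)"
proof -
  define q where "q = rf f0 p X"
  have "binds f0 X q"
    using rf_binds[OF p] unfolding q_def by simp
  then obtain b where "subf f0 q = Some (Mu X b) \<or> subf f0 q = Some (Nu X b)"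
    unfolding binds_def by blast
  moreover have reset: "\<forall>r. strict_prefix r q \<longrightarrow> reset f0 \<Gamma> q \<gamma>' c r = c r" for \<gamma>'
    using reset_strict_prefix by blast
  moreover have true_p: "true_at (w, p, c) \<longleftrightarrow> w \<in> env c (q @ [0]) X"
    using p w env_Var[OF p] by (simp add: true_at_def q_def)
  ultimately show ?thesis
  proof (elim disjE)
    assume q: "subf f0 q = Some (Mu X b)"
    have "true_at (w, p, c) \<longleftrightarrow> (\<exists>\<gamma>'<c q. true_at (w, q @ [0], reset f0 \<Gamma> q \<gamma>' c))"
      using true_p true_at_Mu_body[OF q reset] mem_iter_mu_iff[OF mono_body_fun]
      by (simp add: env_Mu_body[OF q] reset_binder)
    moreover have "gnode W R V \<Gamma> f0 (w, p, c) = (if \<not> (\<exists>\<delta>. \<delta> < c q) then Win Abelard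
        else Turn Eloise {(w, q @ [0], reset f0 \<Gamma> q \<gamma>' c) | \<gamma>'. \<gamma>' < c q})"
      using p q unfolding q_def by (simp add: gnode_def Let_def)
    ultimately show ?thesis
      unfolding locally_consistent_def by auto
  next
    assume q: "subf f0 q = Some (Nu X b)"
    have "true_at (w, p, c) \<longleftrightarrow> (\<forall>\<gamma>'<c q. true_at (w, q @ [0], reset f0 \<Gamma> q \<gamma>' c))"
      using true_p true_at_Nu_body[OF q reset] mem_iter_nu_iff[OF mono_body_fun body_fun_subset w]
      by (simp add: env_Nu_body[OF q] reset_binder)
    moreover have "gnode W R V \<Gamma> f0 (w, p, c) = (if \<not> (\<exists>\<delta>. \<delta> < c q) then Win Eloise
        else Turn Abelard {(w, q @ [0], reset f0 \<Gamma> q \<gamma>' c) | \<gamma>'. \<gamma>' < c q})"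
      using p q unfolding q_def by (simp add: gnode_def Let_def)
    ultimately show ?thesis
      unfolding locally_consistent_def by auto
  qed
qed

lemma locally_consistent_true_at:
  assumes w: "w \<in> W"
  shows "locally_consistent (gnode W R V \<Gamma> f0) true_at (w, p, c)"
proof (cases "subf f0 p")
  case None
  then show ?thesis
    by (simp add: locally_consistent_def gnode_def true_at_def)
next
  case (Some g)
  have child: "true_at (v, p @ [i], c) \<longleftrightarrow> v \<in> den W R V \<Gamma> (env c p) h"
    if "\<forall>X a. g \<noteq> Mu X a \<and> g \<noteq> Nu X a" "subf g [i] = Some h" for v i h
    using true_at_child[OF Some _ that(2)] that(1) Some by (auto simp: Sub_munu_def binds_def)
  show ?thesis
  proof (cases g)
    case (Var X)
    then show ?thesis
      using locally_consistent_Var w Some by simp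
  next
    case (Mu X a)
    have "true_at (w, p @ [0], c(p := \<gamma>)) \<longleftrightarrow>
        w \<in> body_fun (env c p) X a (iter_mu (body_fun (env c p) X a) \<gamma>)" for \<gamma>
      using true_at_Mu_body[of p X a "c(p := \<gamma>)" c w] Some Mu by auto
    moreover have "true_at (w, p, c) \<longleftrightarrow> w \<in> iter_mu (body_fun (env c p) X a) \<Gamma>"
      using Some Mu by (simp add: true_at_def)
    ultimately have "true_at (w, p, c) \<longleftrightarrow> (\<exists>\<gamma><\<Gamma>. true_at (w, p @ [0], c(p := \<gamma>)))"
      by (simp add: mem_iter_mu_iff[OF mono_body_fun])
    then show ?thesis
      using Some Mu by (auto simp: locally_consistent_def gnode_def)
  next
    case (Nu X a)
    have "true_at (w, p @ [0], c(p := \<gamma>)) \<longleftrightarrow>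
        w \<in> body_fun (env c p) X a (iter_nu W (body_fun (env c p) X a) \<gamma>)" for \<gamma>
      using true_at_Nu_body[of p X a "c(p := \<gamma>)" c w] Some Nu by auto
    moreover have "true_at (w, p, c) \<longleftrightarrow> w \<in> iter_nu W (body_fun (env c p) X a) \<Gamma>"
      using Some Nu by (simp add: true_at_def)
    ultimately have "true_at (w, p, c) \<longleftrightarrow> (\<forall>\<gamma><\<Gamma>. true_at (w, p @ [0], c(p := \<gamma>)))"
      by (simp add: mem_iter_nu_iff[OF mono_body_fun body_fun_subset w])
    then show ?thesis
      using Some Nu by (auto simp: locally_consistent_def gnode_def)
  qed (use Some w child in \<open>auto simp: locally_consistent_def gnode_def true_at_def\<close>)
qed

lemma game_move_cases:
  assumes "game_move (gnode W R V \<Gamma> f0) (w, p, c) y"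
  obtains (descend) v i where "p \<notin> Sub_munu f0" "subf f0 (p @ [i]) \<noteq> None"
      "v \<in> insert w (R `` {w})" "y = (v, p @ [i], c)"
  | (bind) \<gamma> where "p \<in> Sub_munu f0" "subf f0 (p @ [0]) \<noteq> None" "\<gamma> < \<Gamma>"
      "y = (w, p @ [0], c(p := \<gamma>))"
  | (regenerate) q \<gamma>' where "strict_prefix q p" "subf f0 p \<noteq> None" "q \<in> Sub_munu f0" "\<gamma>' < c q"
      "y = (w, q @ [0], reset f0 \<Gamma> q \<gamma>' c)"
proof -
  obtain pl S where node: "gnode W R V \<Gamma> f0 (w, p, c) = Turn pl S" and "y \<in> S"
    using assms unfolding game_move_def by blast
  then obtain g where g: "subf f0 p = Some g"
    by (cases "subf f0 p") (auto simp: gnode_def)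
  have nonbinder: "p \<notin> Sub_munu f0" if "\<forall>X a. g \<noteq> Mu X a \<and> g \<noteq> Nu X a"
    using that g unfolding Sub_munu_def binds_def by auto
  have child: "subf f0 (p @ [i]) = subf g [i]" for i
    using g by (simp add: subf_append)
  show thesis
  proof (cases g)
    case (Var X)
    define q where "q = rf f0 p X"
    have pX: "subf f0 p = Some (Var X)"
      using g Var by simp
    have "strict_prefix q p" "binds f0 X q"
      using rf_binds[OF pX] unfolding q_def by auto
    moreover from \<open>binds f0 X q\<close> obtain b where "subf f0 q = Some (Mu X b) \<or> subf f0 q = Some (Nu X b)"
      unfolding binds_def by blast
    then obtain \<gamma>' where "\<gamma>' < c q" "y = (w, q @ [0], reset f0 \<Gamma> q \<gamma>' c)"
      using node \<open>y \<in> S\<close> pX unfolding q_def by (auto simp: gnode_def Let_def split: if_splits)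
    ultimately show thesis
      using regenerate g by (auto simp: Sub_munu_def)
  next
    case (Mu X a)
    then show thesis
      using bind node \<open>y \<in> S\<close> g child by (auto simp: gnode_def Sub_munu_def binds_def)
  next
    case (Nu X a)
    then show thesis
      using bind node \<open>y \<in> S\<close> g child by (auto simp: gnode_def Sub_munu_def binds_def)
  next
    case (Or a b)
    then show thesis
      using descend[of 0 w] descend[of 1 w] node \<open>y \<in> S\<close> g nonbinder child by (auto simp: gnode_def)
  next
    case (And a b)
    then show thesis
      using descend[of 0 w] descend[of 1 w] node \<open>y \<in> S\<close> g nonbinder child by (auto simp: gnode_def)
  next
    case (Dia a)
    then show thesis
      using descend[where i=0] node \<open>y \<in> S\<close> g nonbinder child by (auto simp: gnode_def split: if_splits)
  next
    case (Box a)
    then show thesis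
      using descend[where i=0] node \<open>y \<in> S\<close> g nonbinder child by (auto simp: gnode_def split: if_splits)
  qed (use node g in \<open>auto simp: gnode_def\<close>)
qed

lemma game_move_world:
  assumes "game_move (gnode W R V \<Gamma> f0) x y" "fst x \<in> W"
  shows "fst y \<in> W"
proof -
  obtain w p c where x: "x = (w, p, c)"
    by (cases x) auto
  from assms(1) show ?thesis
    unfolding x by (cases rule: game_move_cases) (use assms(2) R_subset x in auto)
qed

text \<open>Every move either descends in the syntax tree, leaving all clocks read along the path
  unchanged, or strictly lowers the clock of a binder on the path while only resetting clocks of
  binders below it. Reading the clocks of the binders on the current path from the root therefore
  gives a lexicographically decreasing word, and descending moves shorten the remaining depth.\<close>

definition path_clock :: "(nat list \<Rightarrow> 'o) \<Rightarrow> nat list \<Rightarrow> nat \<Rightarrow> 'o" where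
  "path_clock c p k = (if k < length p \<and> take k p \<in> Sub_munu f0 then c (take k p) else \<Gamma>)"

definition rank :: "('w, 'o) gpos \<Rightarrow> 'o list \<times> nat" where
  "rank x = (case x of (w, p, c) \<Rightarrow> (map (path_clock c p) [0..<size f0], size f0 - length p))"

lemma path_clock_reset:
  assumes "strict_prefix q p" "length p \<le> size f0" "q \<in> Sub_munu f0" "\<gamma>' < c q"
  shows "(map (path_clock (reset f0 \<Gamma> q \<gamma>' c) (q @ [0])) [0..<size f0],
      map (path_clock c p) [0..<size f0]) \<in> lex {(a, b). a < b}"
proof (rule map_upt_in_lex)
  have "length q < length p"
    using prefix_length_less[OF assms(1)] .
  then show "length q < size f0"
    using assms(2) by simp
  have q: "take (length q) p = q"
    using assms(1) by (metis prefix_def strict_prefix_def append_eq_conv_conj)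
  have "take k p = take k q" if "k < length q" for k
    using q that by (metis min.strict_order_iff take_take)
  then show "\<forall>k<length q. path_clock (reset f0 \<Gamma> q \<gamma>' c) (q @ [0]) k = path_clock c p k"
    using \<open>length q < length p\<close> by (simp add: path_clock_def reset_strict_prefix strict_prefix_take)
  show "(path_clock (reset f0 \<Gamma> q \<gamma>' c) (q @ [0]) (length q), path_clock c p (length q))
      \<in> {(a, b). a < b}"
    using assms(3,4) \<open>length q < length p\<close> q by (simp add: path_clock_def reset_binder)
qed

lemma rank_decreases:
  assumes "game_move (gnode W R V \<Gamma> f0) x y"
  shows "(rank y, rank x) \<in> lex {(a, b). a < b} <*lex*> less_than"
proof -
  obtain w p c where x: "x = (w, p, c)"
    by (cases x) auto
  from assms[unfolded x] show ?thesis
  proof (cases rule: game_move_cases)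
    case (descend v i)
    have "length p < size f0"
      using subf_length[OF descend(2)] by simp
    moreover have "path_clock c (p @ [i]) k = path_clock c p k" for k
      using descend(1) unfolding path_clock_def by (auto simp: less_Suc_eq)
    ultimately show ?thesis
      using descend(4) x by (simp add: rank_def diff_less_mono2 fun_eq_iff[symmetric])
  next
    case (bind \<gamma>)
    have "length p < size f0"
      using subf_length[OF bind(2)] by simp
    then have "(map (path_clock (c(p := \<gamma>)) (p @ [0])) [0..<size f0], map (path_clock c p) [0..<size f0])
        \<in> lex {(a, b). a < b}"
      by (rule map_upt_in_lex) (use bind in \<open>auto simp: path_clock_def\<close>)
    then show ?thesis
      using bind(4) x by (simp add: rank_def)
  next
    case (regenerate q \<gamma>')
    then show ?thesis
      using path_clock_reset[of q p \<gamma>' c] subf_length[OF regenerate(2)] x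
      by (simp add: rank_def)
  qed
qed

lemma wf_game_move: "wf {(y, x). game_move (gnode W R V \<Gamma> f0) x y}"
proof (rule wf_subset)
  show "wf (inv_image (lex {(a, b). a < b} <*lex*> less_than) rank)"
    by (intro wf_inv_image wf_lex_prod wf_lex wf wf_less_than)
  show "{(y, x). game_move (gnode W R V \<Gamma> f0) x y} \<subseteq> inv_image (lex {(a, b). a < b} <*lex*> less_than) rank"
    using rank_decreases by auto
qed

end

theorem mainTheorem3:
  fixes W :: "'w set" and R :: "('w \<times> 'w) set" and V :: "'p \<Rightarrow> 'w set"
    and \<Gamma> :: "'o::wellorder" and w0 :: 'w and \<phi>0 :: "('p, 'l) fml"
  assumes "\<exists>\<delta>. \<delta> < \<Gamma>"
    and "R \<subseteq> W \<times> W" and "\<forall>p. V p \<subseteq> W"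
    and "w0 \<in> W"
    and "sentence \<phi>0" and "normal_form \<phi>0"
  shows "sat W R V \<Gamma> w0 \<phi>0 \<longleftrightarrow> eloise_wins W R V \<Gamma> w0 \<phi>0"
proof -
  interpret evaluation_game W R V \<Gamma> \<phi>0
    using assms(2,3,5,6) by unfold_locales
  have "true_at (init_pos \<Gamma> w0) \<longleftrightarrow>
      (\<exists>\<sigma>. strategy_wins (gnode W R V \<Gamma> \<phi>0) (init_pos \<Gamma> w0) \<sigma>)"
  proof (rule consistent_labelling_iff_strategy_wins[OF wf_game_move, where I="\<lambda>x. fst x \<in> W"])
    show "fst (init_pos \<Gamma> w0) \<in> W"
      using assms(4) by (simp add: init_pos_def)
    show "fst y \<in> W" if "fst x \<in> W" "game_move (gnode W R V \<Gamma> \<phi>0) x y" for x y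
      using game_move_world that by blast
    show "locally_consistent (gnode W R V \<Gamma> \<phi>0) true_at x" if "fst x \<in> W" for x
      using that locally_consistent_true_at by (cases x) auto
  qed
  then show ?thesis
    by (simp add: true_at_init eloise_wins_def winning_strategy_iff_strategy_wins)
qed

end
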